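(* Let $(A,\mu,\alpha,\beta)$ be a BiHom-associative algebra and $r=\sum_i x_i\otimes y_i\in A\otimes A$ with $(\alpha\otimes\alpha)(r)=r=(\beta\otimes\beta)(r)$, and suppose $r$ is a solution of the associative BiHom-Yang-Baxter equation. Define $R:A\to A$ by $R(a)=\sum_i\alpha\beta^3(x_i)\,(a\,\alpha^3(y_i))$ (which equals $\sum_i(\beta^3(x_i)\,a)\,\alpha^3\beta(y_i)$). Then $R$ commutes with $\alpha$ and $\beta$ and satisfies $R(\alpha\beta(a))R(\alpha\beta(b))=R\big(\alpha\beta(a)R(b)+R(a)\alpha\beta(b)\big)$ for all $a,b\in A$, i.e. $R$ is an $\alpha\beta$-Rota-Baxter operator.
   Context: A BiHom-associative algebra $(A,\mu,\alpha,\beta)$: linear space with bilinear $\mu(x\otimes y)=xy$ and linear maps $\alpha,\beta$ with $\alpha\beta=\beta\alpha$, both multiplicative, and $\alpha(x)(yz)=(xy)\beta(z)$ for all $x,y,z$. For $r=\sum_i x_i\otimes y_i$ with $(\alpha\otimes\alpha)(r)=r=(\beta\otimes\beta)(r)$, $r$ is a solution of the associative BiHom-Yang-Baxter equation if $\sum_{i,j}\alpha(x_i)\otimes y_ix_j\otimes\beta(y_j)=\sum_{i,j}x_ix_j\otimes\beta(y_j)\otimes\beta(y_i)+\sum_{i,j}\alpha(x_i)\otimes\alpha(x_j)\otimes y_jy_i$ in $A\otimes A\otimes A$. *)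

theory Defs
  imports Complex_Main
begin

text \<open>An algebra over an arbitrary field 'k: the carrier type 'a is a 'k-vector space
  via the scalar multiplication scale; mu is the (bilinear) multiplication.\<close>

definition bilinear_map :: "('k::field \<Rightarrow> 'a::ab_group_add \<Rightarrow> 'a) \<Rightarrow> ('k \<Rightarrow> 'b::ab_group_add \<Rightarrow> 'b)
    \<Rightarrow> ('a \<Rightarrow> 'a \<Rightarrow> 'b) \<Rightarrow> bool" where
  "bilinear_map s t f \<longleftrightarrow>
     (\<forall>x. Vector_Spaces.linear s t (f x)) \<and> (\<forall>y. Vector_Spaces.linear s t (\<lambda>x. f x y))"

definition trilinear_map :: "('k::field \<Rightarrow> 'a::ab_group_add \<Rightarrow> 'a) \<Rightarrow> ('k \<Rightarrow> 'b::ab_group_add \<Rightarrow> 'b)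
    \<Rightarrow> ('a \<Rightarrow> 'a \<Rightarrow> 'a \<Rightarrow> 'b) \<Rightarrow> bool" where
  "trilinear_map s t f \<longleftrightarrow>
     (\<forall>y z. Vector_Spaces.linear s t (\<lambda>x. f x y z)) \<and>
     (\<forall>x z. Vector_Spaces.linear s t (\<lambda>y. f x y z)) \<and>
     (\<forall>x y. Vector_Spaces.linear s t (\<lambda>z. f x y z))"

definition bihom_assoc_alg :: "('k::field \<Rightarrow> 'a::ab_group_add \<Rightarrow> 'a) \<Rightarrow> ('a \<Rightarrow> 'a \<Rightarrow> 'a)
    \<Rightarrow> ('a \<Rightarrow> 'a) \<Rightarrow> ('a \<Rightarrow> 'a) \<Rightarrow> bool" where
  "bihom_assoc_alg s mu alpha beta \<longleftrightarrow>
     vector_space s \<and> bilinear_map s s mu \<and>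
     Vector_Spaces.linear s s alpha \<and> Vector_Spaces.linear s s beta \<and>
     alpha \<circ> beta = beta \<circ> alpha \<and>
     (\<forall>x y. alpha (mu x y) = mu (alpha x) (alpha y)) \<and>
     (\<forall>x y. beta (mu x y) = mu (beta x) (beta y)) \<and>
     (\<forall>x y z. mu (alpha x) (mu y z) = mu (mu x y) (beta z))"

text \<open>Elements of A \<otimes> A (resp. A \<otimes> A \<otimes> A) are represented by finite lists of
  elementary tensors: the list [(x1,y1),...,(xn,yn)] stands for sum_i x_i \<otimes> y_i.
  Two such representatives denote the same element of the tensor product over the field 'k
  iff every bilinear (resp. trilinear) form A \<times> A \<rightarrow> 'k takes the same value on them
  (universal property of the tensor product plus the fact that linear functionals
  separate points of a vector space).\<close>

definition tensor2_eq :: "('k::field \<Rightarrow> 'a::ab_group_add \<Rightarrow> 'a) \<Rightarrow> ('a \<times> 'a) list \<Rightarrow> ('a \<times> 'a) list \<Rightarrow> bool" where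
  "tensor2_eq s r r' \<longleftrightarrow>
     (\<forall>f :: 'a \<Rightarrow> 'a \<Rightarrow> 'k. bilinear_map s (*) f \<longrightarrow>
        (\<Sum>(x,y)\<leftarrow>r. f x y) = (\<Sum>(x,y)\<leftarrow>r'. f x y))"

definition tensor3_eq :: "('k::field \<Rightarrow> 'a::ab_group_add \<Rightarrow> 'a) \<Rightarrow> ('a \<times> 'a \<times> 'a) list \<Rightarrow> ('a \<times> 'a \<times> 'a) list \<Rightarrow> bool" where
  "tensor3_eq s t t' \<longleftrightarrow>
     (\<forall>f :: 'a \<Rightarrow> 'a \<Rightarrow> 'a \<Rightarrow> 'k. trilinear_map s (*) f \<longrightarrow>
        (\<Sum>(x,y,z)\<leftarrow>t. f x y z) = (\<Sum>(x,y,z)\<leftarrow>t'. f x y z))"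

definition tmap2 :: "('a \<Rightarrow> 'a) \<Rightarrow> ('a \<times> 'a) list \<Rightarrow> ('a \<times> 'a) list" where
  "tmap2 f r = map (\<lambda>(x,y). (f x, f y)) r"

definition bihom_aybe :: "('k::field \<Rightarrow> 'a::ab_group_add \<Rightarrow> 'a) \<Rightarrow> ('a \<Rightarrow> 'a \<Rightarrow> 'a)
    \<Rightarrow> ('a \<Rightarrow> 'a) \<Rightarrow> ('a \<Rightarrow> 'a) \<Rightarrow> ('a \<times> 'a) list \<Rightarrow> bool" where
  "bihom_aybe s mu alpha beta r \<longleftrightarrow>
     tensor3_eq s
       [(alpha xi, mu yi xj, beta yj). (xi,yi) \<leftarrow> r, (xj,yj) \<leftarrow> r]
       ([(mu xi xj, beta yj, beta yi). (xi,yi) \<leftarrow> r, (xj,yj) \<leftarrow> r] @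
        [(alpha xi, alpha xj, mu yj yi). (xi,yi) \<leftarrow> r, (xj,yj) \<leftarrow> r])"

end

theory Submission
  imports Defs
begin

(* Since r is fixed by alpha \<otimes> alpha and beta \<otimes> beta, it is fixed by every
   alpha^m beta^n \<otimes> alpha^m beta^n, so structure maps can be traded between the two legs of r:
   R c = sum_i alpha^(p+1) beta^(q+3) x_i (c alpha^(p+3) beta^q y_i) for all p, q. Taking
   (p, q) = (1, 0) and (0, 1) gives the commutation of R with alpha and beta. For the
   Rota-Baxter identity, both sides of the associative BiHom-Yang-Baxter equation are contracted
   with one trilinear form built from a and b; after suitable shifts and BiHom-associativity,
   the left side becomes R(alpha beta a) R(alpha beta b) and the two terms on the right become
   R(R a alpha beta b) and R(alpha beta a R b). *)

lemma vector_space_field_mult: "vector_space ((*) :: 'k::field \<Rightarrow> 'k \<Rightarrow> 'k)"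
  by unfold_locales (auto simp: algebra_simps)

lemma linear_functionals_separate:
  fixes s :: "'k::field \<Rightarrow> 'a::ab_group_add \<Rightarrow> 'a"
  assumes "vector_space s"
    and "\<And>\<phi> :: 'a \<Rightarrow> 'k. Vector_Spaces.linear s (*) \<phi> \<Longrightarrow> \<phi> u = \<phi> v"
  shows "u = v"
proof (rule ccontr)
  assume "u \<noteq> v"
  interpret vector_space_pair s "(*) :: 'k \<Rightarrow> 'k \<Rightarrow> 'k"
    using assms(1) vector_space_field_mult by (simp add: vector_space_pair_def)
  have "vs1.independent {u - v}"
    using \<open>u \<noteq> v\<close> vs1.independent_insertI[of "u - v" "{}"] by simp
  then obtain \<phi> :: "'a \<Rightarrow> 'k" where \<phi>: "Vector_Spaces.linear s (*) \<phi>" "\<phi> (u - v) = 1"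
    using linear_independent_extend[of "{u - v}" "\<lambda>_. 1"] by auto
  with assms(2)[OF \<phi>(1)] show False
    by (simp add: linear_diff[OF \<phi>(1)])
qed

lemma linear_sum_list_split:
  assumes "Vector_Spaces.linear s t f"
  shows "f (\<Sum>(x,y)\<leftarrow>xs. g x y) = (\<Sum>(x,y)\<leftarrow>xs. f (g x y))"
proof -
  have add: "f (x + y) = f x + f y" for x y
    using assms by (simp add: Vector_Spaces.linear_iff)
  then have "f 0 = 0"
    by (metis add_cancel_right_right)
  with add show ?thesis
    by (induction xs) auto
qed

lemma linear_compose_sum_list:
  assumes "vector_space s" and "vector_space t"
    and "\<And>x y. Vector_Spaces.linear s t (g x y)"
  shows "Vector_Spaces.linear s t (\<lambda>c. \<Sum>(x,y)\<leftarrow>xs. g x y c)"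
proof -
  interpret vector_space_pair s t
    using assms(1,2) by (simp add: vector_space_pair_def)
  show ?thesis
    by (induction xs) (auto simp: linear_zero assms(3) intro!: linear_compose_add)
qed

lemma sum_list_map_concat:
  "sum_list (map f (concat xss)) = sum_list (map (\<lambda>xs. sum_list (map f xs)) xss)"
  by (induction xss) auto

lemma bilinear_map_precompose:
  assumes "bilinear_map s t G" and "Vector_Spaces.linear s s h"
  shows "bilinear_map s t (\<lambda>x y. G (h x) (h y))"
  using assms Vector_Spaces.linear_compose[of s s h t]
  unfolding bilinear_map_def by (auto simp: o_def)

lemma bilinear_map_postcompose:
  assumes "bilinear_map s t G" and "Vector_Spaces.linear t u \<phi>"
  shows "bilinear_map s u (\<lambda>x y. \<phi> (G x y))"
  using assms Vector_Spaces.linear_compose[of s t _ u \<phi>]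
  unfolding bilinear_map_def by (auto simp: o_def)

lemma trilinear_map_postcompose:
  assumes "trilinear_map s t G" and "Vector_Spaces.linear t u \<phi>"
  shows "trilinear_map s u (\<lambda>x y z. \<phi> (G x y z))"
  using assms Vector_Spaces.linear_compose[of s t _ u \<phi>]
  unfolding trilinear_map_def by (auto simp: o_def)

lemma linear_funpow:
  assumes "Vector_Spaces.linear s s f"
  shows "Vector_Spaces.linear s s (f ^^ n)"
proof (induction n)
  case 0
  have "vector_space s"
    using assms by (simp add: Vector_Spaces.linear_iff)
  then show ?case
    by (simp add: vector_space.linear_ident)
next
  case (Suc n)
  show ?case
    using Vector_Spaces.linear_compose[OF Suc assms] by (simp add: o_def)
qed

lemma tensor2_eq_sum_eq:
  assumes "tensor2_eq s r r'" and "bilinear_map s t G" and "vector_space t"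
  shows "(\<Sum>(x,y)\<leftarrow>r. G x y) = (\<Sum>(x,y)\<leftarrow>r'. G x y)"
proof (rule linear_functionals_separate[OF \<open>vector_space t\<close>])
  fix \<phi> assume \<phi>: "Vector_Spaces.linear t (*) \<phi>"
  have "bilinear_map s (*) (\<lambda>x y. \<phi> (G x y))"
    using assms(2) \<phi> by (rule bilinear_map_postcompose)
  with assms(1) show "\<phi> (\<Sum>(x,y)\<leftarrow>r. G x y) = \<phi> (\<Sum>(x,y)\<leftarrow>r'. G x y)"
    unfolding linear_sum_list_split[OF \<phi>] tensor2_eq_def by blast
qed

lemma tensor3_eq_sum_eq:
  assumes "tensor3_eq s t t'" and "trilinear_map s u G" and "vector_space u"
  shows "(\<Sum>(x,y,z)\<leftarrow>t. G x y z) = (\<Sum>(x,y,z)\<leftarrow>t'. G x y z)"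
proof (rule linear_functionals_separate[OF \<open>vector_space u\<close>])
  fix \<phi> assume \<phi>: "Vector_Spaces.linear u (*) \<phi>"
  have "trilinear_map s (*) (\<lambda>x y z. \<phi> (G x y z))"
    using assms(2) \<phi> by (rule trilinear_map_postcompose)
  moreover have "\<phi> (\<Sum>(x,y,z)\<leftarrow>w. G x y z) = (\<Sum>(x,y,z)\<leftarrow>w. \<phi> (G x y z))" for w
    using linear_sum_list_split[OF \<phi>, of "\<lambda>x (y,z). G x y z" w] by (simp add: split_def)
  ultimately show "\<phi> (\<Sum>(x,y,z)\<leftarrow>t. G x y z) = \<phi> (\<Sum>(x,y,z)\<leftarrow>t'. G x y z)"
    using assms(1) unfolding tensor3_eq_def by presburger
qed

lemma tensor2_eq_tmap2_compose:
  fixes s :: "'k::field \<Rightarrow> 'a::ab_group_add \<Rightarrow> 'a"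
  assumes "Vector_Spaces.linear s s g"
    and "tensor2_eq s (tmap2 g r) r" and "tensor2_eq s (tmap2 h r) r"
  shows "tensor2_eq s (tmap2 (\<lambda>x. g (h x)) r) r"
  unfolding tensor2_eq_def
proof (intro allI impI)
  fix f :: "'a \<Rightarrow> 'a \<Rightarrow> 'k" assume f: "bilinear_map s (*) f"
  then have fg: "bilinear_map s (*) (\<lambda>x y. f (g x) (g y))"
    using assms(1) by (rule bilinear_map_precompose)
  have "(\<Sum>(x,y)\<leftarrow>tmap2 (\<lambda>x. g (h x)) r. f x y) = (\<Sum>(x,y)\<leftarrow>tmap2 h r. f (g x) (g y))"
    by (simp add: tmap2_def o_def split_def)
  also have "\<dots> = (\<Sum>(x,y)\<leftarrow>r. f (g x) (g y))"
    using assms(3) fg unfolding tensor2_eq_def by blast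
  also have "\<dots> = (\<Sum>(x,y)\<leftarrow>tmap2 g r. f x y)"
    by (simp add: tmap2_def o_def split_def)
  also have "\<dots> = (\<Sum>(x,y)\<leftarrow>r. f x y)"
    using assms(2) f unfolding tensor2_eq_def by blast
  finally show "(\<Sum>(x,y)\<leftarrow>tmap2 (\<lambda>x. g (h x)) r. f x y) = (\<Sum>(x,y)\<leftarrow>r. f x y)" .
qed

lemma tensor2_eq_tmap2_funpow:
  assumes "Vector_Spaces.linear s s h" and "tensor2_eq s (tmap2 h r) r"
  shows "tensor2_eq s (tmap2 (h ^^ n) r) r"
proof (induction n)
  case 0
  show ?case
    by (simp add: tensor2_eq_def tmap2_def split_def)
next
  case (Suc n)
  then show ?case
    using tensor2_eq_tmap2_compose[OF assms Suc] by simp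
qed

locale bihom_algebra =
  fixes s :: "'k::field \<Rightarrow> 'a::ab_group_add \<Rightarrow> 'a"
    and mu :: "'a \<Rightarrow> 'a \<Rightarrow> 'a"  (infixl \<open>\<cdot>\<close> 70)
    and alpha beta :: "'a \<Rightarrow> 'a"
  assumes bihom_assoc_alg: "bihom_assoc_alg s mu alpha beta"
begin

lemma vector_space: "vector_space s"
  and linear_alpha: "Vector_Spaces.linear s s alpha"
  and linear_beta: "Vector_Spaces.linear s s beta"
  and bilinear_mult: "bilinear_map s s mu"
  and alpha_beta_commute: "alpha (beta x) = beta (alpha x)"
  and alpha_mult: "alpha (x \<cdot> y) = alpha x \<cdot> alpha y"
  and beta_mult: "beta (x \<cdot> y) = beta x \<cdot> beta y"
  and bihom_assoc: "alpha x \<cdot> (y \<cdot> z) = (x \<cdot> y) \<cdot> beta z"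
  using bihom_assoc_alg unfolding bihom_assoc_alg_def by (auto simp: fun_eq_iff)

lemma linear_compose_mult_left:
    "Vector_Spaces.linear s s f \<Longrightarrow> Vector_Spaces.linear s s (\<lambda>x. f x \<cdot> c)"
  and linear_compose_mult_right:
    "Vector_Spaces.linear s s f \<Longrightarrow> Vector_Spaces.linear s s (\<lambda>x. c \<cdot> f x)"
  using Vector_Spaces.linear_compose[of s s f s] bilinear_mult
  unfolding bilinear_map_def by (auto simp: o_def)

lemma mult_sum_list_left: "(\<Sum>(x,y)\<leftarrow>xs. g x y) \<cdot> c = (\<Sum>(x,y)\<leftarrow>xs. g x y \<cdot> c)"
  and mult_sum_list_right: "c \<cdot> (\<Sum>(x,y)\<leftarrow>xs. g x y) = (\<Sum>(x,y)\<leftarrow>xs. c \<cdot> g x y)"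
  using bilinear_mult linear_sum_list_split unfolding bilinear_map_def by blast+

lemma funpow_alpha_mult: "(alpha ^^ m) (x \<cdot> y) = (alpha ^^ m) x \<cdot> (alpha ^^ m) y"
  by (induction m) (simp_all add: alpha_mult)

lemma funpow_beta_mult: "(beta ^^ n) (x \<cdot> y) = (beta ^^ n) x \<cdot> (beta ^^ n) y"
  by (induction n) (simp_all add: beta_mult)

lemma funpow_beta_alpha_commute: "(beta ^^ n) ((alpha ^^ m) x) = (alpha ^^ m) ((beta ^^ n) x)"
proof -
  have "beta ((alpha ^^ m) y) = (alpha ^^ m) (beta y)" for y
    by (induction m) (simp_all flip: alpha_beta_commute)
  then show ?thesis
    by (induction n) simp_all
qed

definition alpha_beta_pow :: "nat \<Rightarrow> nat \<Rightarrow> 'a \<Rightarrow> 'a"  (\<open>\<gamma>\<^bsup>_,_\<^esup>\<close> [0, 0] 1000)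
  where "\<gamma>\<^bsup>m,n\<^esup> x = (alpha ^^ m) ((beta ^^ n) x)"

lemma linear_alpha_beta_pow: "Vector_Spaces.linear s s \<gamma>\<^bsup>m,n\<^esup>"
  using Vector_Spaces.linear_compose[OF linear_funpow[OF linear_beta] linear_funpow[OF linear_alpha]]
  by (simp add: alpha_beta_pow_def[abs_def] o_def)

(* Otherwise simp unfolds 1 to Suc 0, and exponent sums such as 1 + 2 end up as
   Suc (Suc (Suc 0)) instead of the numeral 3. *)
declare One_nat_def [simp del]

lemma alpha_beta_pow_simps:
  "alpha x = \<gamma>\<^bsup>1,0\<^esup> x" "beta x = \<gamma>\<^bsup>0,1\<^esup> x"
  "(alpha ^^ m) x = \<gamma>\<^bsup>m,0\<^esup> x" "(beta ^^ n) x = \<gamma>\<^bsup>0,n\<^esup> x"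
  "\<gamma>\<^bsup>0,0\<^esup> x = x"
  "\<gamma>\<^bsup>m,n\<^esup> (\<gamma>\<^bsup>p,q\<^esup> x) = \<gamma>\<^bsup>m + p,n + q\<^esup> x"
  "\<gamma>\<^bsup>m,n\<^esup> (x \<cdot> y) = \<gamma>\<^bsup>m,n\<^esup> x \<cdot> \<gamma>\<^bsup>m,n\<^esup> y"
  by (simp_all add: alpha_beta_pow_def funpow_add funpow_alpha_mult funpow_beta_mult
      funpow_beta_alpha_commute One_nat_def)

(* Contracting the three legs of the associative BiHom-Yang-Baxter equation with this form
   produces the three products in the Rota-Baxter identity for a and b. *)
definition rb_form :: "'a \<Rightarrow> 'a \<Rightarrow> 'a \<Rightarrow> 'a \<Rightarrow> 'a \<Rightarrow> 'a" where
  "rb_form a b u v w = \<gamma>\<^bsup>3,6\<^esup> u \<cdot> (\<gamma>\<^bsup>2,1\<^esup> a \<cdot> (\<gamma>\<^bsup>4,3\<^esup> v \<cdot> (\<gamma>\<^bsup>1,0\<^esup> b \<cdot> \<gamma>\<^bsup>6,0\<^esup> w)))"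

lemma trilinear_rb_form: "trilinear_map s s (rb_form a b)"
  unfolding trilinear_map_def rb_form_def
  by (intro allI conjI linear_compose_mult_left linear_compose_mult_right linear_alpha_beta_pow)

lemma rb_form_alpha_mult_beta:
  "rb_form a b (alpha xi) (yi \<cdot> xj) (beta yj)
    = (\<gamma>\<^bsup>3,6\<^esup> xi \<cdot> (\<gamma>\<^bsup>1,1\<^esup> a \<cdot> \<gamma>\<^bsup>5,3\<^esup> yi)) \<cdot> (\<gamma>\<^bsup>4,5\<^esup> xj \<cdot> (\<gamma>\<^bsup>1,1\<^esup> b \<cdot> \<gamma>\<^bsup>6,2\<^esup> yj))"
proof -
  have "rb_form a b (alpha xi) (yi \<cdot> xj) (beta yj)
      = \<gamma>\<^bsup>4,6\<^esup> xi \<cdot> (\<gamma>\<^bsup>2,1\<^esup> a \<cdot> ((\<gamma>\<^bsup>4,3\<^esup> yi \<cdot> \<gamma>\<^bsup>4,3\<^esup> xj) \<cdot> (\<gamma>\<^bsup>1,0\<^esup> b \<cdot> \<gamma>\<^bsup>6,1\<^esup> yj)))"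
    by (simp add: rb_form_def alpha_beta_pow_simps)
  also have "\<dots> = (\<gamma>\<^bsup>3,6\<^esup> xi \<cdot> \<gamma>\<^bsup>2,1\<^esup> a) \<cdot> ((\<gamma>\<^bsup>4,4\<^esup> yi \<cdot> \<gamma>\<^bsup>4,4\<^esup> xj) \<cdot> (\<gamma>\<^bsup>1,1\<^esup> b \<cdot> \<gamma>\<^bsup>6,2\<^esup> yj))"
    using bihom_assoc[of "\<gamma>\<^bsup>3,6\<^esup> xi" "\<gamma>\<^bsup>2,1\<^esup> a" "(\<gamma>\<^bsup>4,3\<^esup> yi \<cdot> \<gamma>\<^bsup>4,3\<^esup> xj) \<cdot> (\<gamma>\<^bsup>1,0\<^esup> b \<cdot> \<gamma>\<^bsup>6,1\<^esup> yj)"]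
    by (simp add: alpha_beta_pow_simps)
  also have "\<dots> = (\<gamma>\<^bsup>3,6\<^esup> xi \<cdot> \<gamma>\<^bsup>2,1\<^esup> a) \<cdot> (\<gamma>\<^bsup>5,4\<^esup> yi \<cdot> (\<gamma>\<^bsup>4,4\<^esup> xj \<cdot> (\<gamma>\<^bsup>1,0\<^esup> b \<cdot> \<gamma>\<^bsup>6,1\<^esup> yj)))"
    using bihom_assoc[of "\<gamma>\<^bsup>4,4\<^esup> yi" "\<gamma>\<^bsup>4,4\<^esup> xj" "\<gamma>\<^bsup>1,0\<^esup> b \<cdot> \<gamma>\<^bsup>6,1\<^esup> yj"]
    by (simp add: alpha_beta_pow_simps)
  also have "\<dots> = ((\<gamma>\<^bsup>2,6\<^esup> xi \<cdot> \<gamma>\<^bsup>1,1\<^esup> a) \<cdot> \<gamma>\<^bsup>5,4\<^esup> yi) \<cdot> (\<gamma>\<^bsup>4,5\<^esup> xj \<cdot> (\<gamma>\<^bsup>1,1\<^esup> b \<cdot> \<gamma>\<^bsup>6,2\<^esup> yj))"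
    using bihom_assoc[of "\<gamma>\<^bsup>2,6\<^esup> xi \<cdot> \<gamma>\<^bsup>1,1\<^esup> a" "\<gamma>\<^bsup>5,4\<^esup> yi" "\<gamma>\<^bsup>4,4\<^esup> xj \<cdot> (\<gamma>\<^bsup>1,0\<^esup> b \<cdot> \<gamma>\<^bsup>6,1\<^esup> yj)"]
    by (simp add: alpha_beta_pow_simps)
  also have "\<dots> = (\<gamma>\<^bsup>3,6\<^esup> xi \<cdot> (\<gamma>\<^bsup>1,1\<^esup> a \<cdot> \<gamma>\<^bsup>5,3\<^esup> yi)) \<cdot> (\<gamma>\<^bsup>4,5\<^esup> xj \<cdot> (\<gamma>\<^bsup>1,1\<^esup> b \<cdot> \<gamma>\<^bsup>6,2\<^esup> yj))"
    using bihom_assoc[of "\<gamma>\<^bsup>2,6\<^esup> xi" "\<gamma>\<^bsup>1,1\<^esup> a" "\<gamma>\<^bsup>5,3\<^esup> yi"]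
    by (simp add: alpha_beta_pow_simps)
  finally show ?thesis .
qed

lemma rb_form_mult_beta_beta:
  "rb_form a b (xi \<cdot> xj) (beta yj) (beta yi)
    = \<gamma>\<^bsup>4,6\<^esup> xi \<cdot> (((\<gamma>\<^bsup>1,6\<^esup> xj \<cdot> (a \<cdot> \<gamma>\<^bsup>3,3\<^esup> yj)) \<cdot> \<gamma>\<^bsup>1,1\<^esup> b) \<cdot> \<gamma>\<^bsup>6,3\<^esup> yi)"
proof -
  have "rb_form a b (xi \<cdot> xj) (beta yj) (beta yi)
      = (\<gamma>\<^bsup>3,6\<^esup> xi \<cdot> \<gamma>\<^bsup>3,6\<^esup> xj) \<cdot> (\<gamma>\<^bsup>2,1\<^esup> a \<cdot> (\<gamma>\<^bsup>4,4\<^esup> yj \<cdot> (\<gamma>\<^bsup>1,0\<^esup> b \<cdot> \<gamma>\<^bsup>6,1\<^esup> yi)))"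
    by (simp add: rb_form_def alpha_beta_pow_simps)
  also have "\<dots> = (\<gamma>\<^bsup>3,6\<^esup> xi \<cdot> \<gamma>\<^bsup>3,6\<^esup> xj) \<cdot> ((\<gamma>\<^bsup>1,1\<^esup> a \<cdot> \<gamma>\<^bsup>4,4\<^esup> yj) \<cdot> (\<gamma>\<^bsup>1,1\<^esup> b \<cdot> \<gamma>\<^bsup>6,2\<^esup> yi))"
    using bihom_assoc[of "\<gamma>\<^bsup>1,1\<^esup> a" "\<gamma>\<^bsup>4,4\<^esup> yj" "\<gamma>\<^bsup>1,0\<^esup> b \<cdot> \<gamma>\<^bsup>6,1\<^esup> yi"]
    by (simp add: alpha_beta_pow_simps)
  also have "\<dots> = \<gamma>\<^bsup>4,6\<^esup> xi \<cdot> (\<gamma>\<^bsup>3,6\<^esup> xj \<cdot> ((\<gamma>\<^bsup>1,0\<^esup> a \<cdot> \<gamma>\<^bsup>4,3\<^esup> yj) \<cdot> (\<gamma>\<^bsup>1,0\<^esup> b \<cdot> \<gamma>\<^bsup>6,1\<^esup> yi)))"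
    using bihom_assoc[of "\<gamma>\<^bsup>3,6\<^esup> xi" "\<gamma>\<^bsup>3,6\<^esup> xj" "(\<gamma>\<^bsup>1,0\<^esup> a \<cdot> \<gamma>\<^bsup>4,3\<^esup> yj) \<cdot> (\<gamma>\<^bsup>1,0\<^esup> b \<cdot> \<gamma>\<^bsup>6,1\<^esup> yi)"]
    by (simp add: alpha_beta_pow_simps)
  also have "\<dots> = \<gamma>\<^bsup>4,6\<^esup> xi \<cdot> ((\<gamma>\<^bsup>2,6\<^esup> xj \<cdot> (\<gamma>\<^bsup>1,0\<^esup> a \<cdot> \<gamma>\<^bsup>4,3\<^esup> yj)) \<cdot> (\<gamma>\<^bsup>1,1\<^esup> b \<cdot> \<gamma>\<^bsup>6,2\<^esup> yi))"
    using bihom_assoc[of "\<gamma>\<^bsup>2,6\<^esup> xj" "\<gamma>\<^bsup>1,0\<^esup> a \<cdot> \<gamma>\<^bsup>4,3\<^esup> yj" "\<gamma>\<^bsup>1,0\<^esup> b \<cdot> \<gamma>\<^bsup>6,1\<^esup> yi"]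
    by (simp add: alpha_beta_pow_simps)
  also have "\<dots> = \<gamma>\<^bsup>4,6\<^esup> xi \<cdot> (((\<gamma>\<^bsup>1,6\<^esup> xj \<cdot> (a \<cdot> \<gamma>\<^bsup>3,3\<^esup> yj)) \<cdot> \<gamma>\<^bsup>1,1\<^esup> b) \<cdot> \<gamma>\<^bsup>6,3\<^esup> yi)"
    using bihom_assoc[of "\<gamma>\<^bsup>1,6\<^esup> xj \<cdot> (a \<cdot> \<gamma>\<^bsup>3,3\<^esup> yj)" "\<gamma>\<^bsup>1,1\<^esup> b" "\<gamma>\<^bsup>6,2\<^esup> yi"]
    by (simp add: alpha_beta_pow_simps)
  finally show ?thesis .
qed

lemma rb_form_alpha_alpha_mult:
  "rb_form a b (alpha xi) (alpha xj) (yj \<cdot> yi)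
    = \<gamma>\<^bsup>4,6\<^esup> xi \<cdot> ((\<gamma>\<^bsup>1,1\<^esup> a \<cdot> (\<gamma>\<^bsup>4,3\<^esup> xj \<cdot> (b \<cdot> \<gamma>\<^bsup>6,0\<^esup> yj))) \<cdot> \<gamma>\<^bsup>6,3\<^esup> yi)"
proof -
  have "rb_form a b (alpha xi) (alpha xj) (yj \<cdot> yi)
      = \<gamma>\<^bsup>4,6\<^esup> xi \<cdot> (\<gamma>\<^bsup>2,1\<^esup> a \<cdot> (\<gamma>\<^bsup>5,3\<^esup> xj \<cdot> (\<gamma>\<^bsup>1,0\<^esup> b \<cdot> (\<gamma>\<^bsup>6,0\<^esup> yj \<cdot> \<gamma>\<^bsup>6,0\<^esup> yi))))"
    by (simp add: rb_form_def alpha_beta_pow_simps)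
  also have "\<dots> = \<gamma>\<^bsup>4,6\<^esup> xi \<cdot> (\<gamma>\<^bsup>2,1\<^esup> a \<cdot> (\<gamma>\<^bsup>5,3\<^esup> xj \<cdot> ((b \<cdot> \<gamma>\<^bsup>6,0\<^esup> yj) \<cdot> \<gamma>\<^bsup>6,1\<^esup> yi)))"
    using bihom_assoc[of b "\<gamma>\<^bsup>6,0\<^esup> yj" "\<gamma>\<^bsup>6,0\<^esup> yi"]
    by (simp add: alpha_beta_pow_simps)
  also have "\<dots> = \<gamma>\<^bsup>4,6\<^esup> xi \<cdot> (\<gamma>\<^bsup>2,1\<^esup> a \<cdot> ((\<gamma>\<^bsup>4,3\<^esup> xj \<cdot> (b \<cdot> \<gamma>\<^bsup>6,0\<^esup> yj)) \<cdot> \<gamma>\<^bsup>6,2\<^esup> yi))"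
    using bihom_assoc[of "\<gamma>\<^bsup>4,3\<^esup> xj" "b \<cdot> \<gamma>\<^bsup>6,0\<^esup> yj" "\<gamma>\<^bsup>6,1\<^esup> yi"]
    by (simp add: alpha_beta_pow_simps)
  also have "\<dots> = \<gamma>\<^bsup>4,6\<^esup> xi \<cdot> ((\<gamma>\<^bsup>1,1\<^esup> a \<cdot> (\<gamma>\<^bsup>4,3\<^esup> xj \<cdot> (b \<cdot> \<gamma>\<^bsup>6,0\<^esup> yj))) \<cdot> \<gamma>\<^bsup>6,3\<^esup> yi)"
    using bihom_assoc[of "\<gamma>\<^bsup>1,1\<^esup> a" "\<gamma>\<^bsup>4,3\<^esup> xj \<cdot> (b \<cdot> \<gamma>\<^bsup>6,0\<^esup> yj)" "\<gamma>\<^bsup>6,2\<^esup> yi"]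
    by (simp add: alpha_beta_pow_simps)
  finally show ?thesis .
qed

end

locale bihom_invariant_tensor = bihom_algebra s mu alpha beta
  for s :: "'k::field \<Rightarrow> 'a::ab_group_add \<Rightarrow> 'a"
    and mu :: "'a \<Rightarrow> 'a \<Rightarrow> 'a"  (infixl \<open>\<cdot>\<close> 70)
    and alpha beta :: "'a \<Rightarrow> 'a" +
  fixes r :: "('a \<times> 'a) list"
  assumes r_alpha_invariant: "tensor2_eq s (tmap2 alpha r) r"
    and r_beta_invariant: "tensor2_eq s (tmap2 beta r) r"
begin

lemma r_alpha_beta_pow_invariant: "tensor2_eq s (tmap2 \<gamma>\<^bsup>m,n\<^esup> r) r"
  using tensor2_eq_tmap2_compose[OF linear_funpow[OF linear_alpha]
      tensor2_eq_tmap2_funpow[OF linear_alpha r_alpha_invariant]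
      tensor2_eq_tmap2_funpow[OF linear_beta r_beta_invariant]]
  by (simp add: alpha_beta_pow_def[abs_def])

lemma sum_r_alpha_beta_pow:
  assumes "bilinear_map s s G"
  shows "(\<Sum>(x,y)\<leftarrow>r. G (\<gamma>\<^bsup>m,n\<^esup> x) (\<gamma>\<^bsup>m,n\<^esup> y)) = (\<Sum>(x,y)\<leftarrow>r. G x y)"
  using tensor2_eq_sum_eq[OF r_alpha_beta_pow_invariant assms vector_space]
  by (simp add: tmap2_def split_def o_def)

definition rb_operator :: "'a \<Rightarrow> 'a" where
  "rb_operator c = (\<Sum>(x,y)\<leftarrow>r. \<gamma>\<^bsup>1,3\<^esup> x \<cdot> (c \<cdot> \<gamma>\<^bsup>3,0\<^esup> y))"

lemma rb_operator_shift:
  "rb_operator c = (\<Sum>(x,y)\<leftarrow>r. \<gamma>\<^bsup>p + 1,q + 3\<^esup> x \<cdot> (c \<cdot> \<gamma>\<^bsup>p + 3,q\<^esup> y))"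
proof -
  have "bilinear_map s s (\<lambda>x y. \<gamma>\<^bsup>1,3\<^esup> x \<cdot> (c \<cdot> \<gamma>\<^bsup>3,0\<^esup> y))"
    unfolding bilinear_map_def
    by (intro allI conjI linear_compose_mult_left linear_compose_mult_right linear_alpha_beta_pow)
  from sum_r_alpha_beta_pow[OF this, of p q] show ?thesis
    by (simp add: rb_operator_def alpha_beta_pow_simps add.commute)
qed

lemma linear_rb_operator: "Vector_Spaces.linear s s rb_operator"
  unfolding rb_operator_def[abs_def]
  by (intro linear_compose_sum_list vector_space linear_compose_mult_right
      linear_compose_mult_left vector_space.linear_ident[OF vector_space])

lemma rb_operator_alpha_commute: "rb_operator (alpha c) = alpha (rb_operator c)"
  using rb_operator_shift[of "alpha c" 1 0]
  unfolding rb_operator_def linear_sum_list_split[OF linear_alpha]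
  by (simp add: alpha_beta_pow_simps)

lemma rb_operator_beta_commute: "rb_operator (beta c) = beta (rb_operator c)"
  using rb_operator_shift[of "beta c" 0 1]
  unfolding rb_operator_def linear_sum_list_split[OF linear_beta]
  by (simp add: alpha_beta_pow_simps)

lemma rb_operator_product_expansion:
  "rb_operator (alpha (beta a)) \<cdot> rb_operator (alpha (beta b))
    = (\<Sum>(xi,yi)\<leftarrow>r. \<Sum>(xj,yj)\<leftarrow>r. rb_form a b (alpha xi) (yi \<cdot> xj) (beta yj))"
proof -
  have "rb_operator (alpha (beta a)) = (\<Sum>(xi,yi)\<leftarrow>r. \<gamma>\<^bsup>3,6\<^esup> xi \<cdot> (\<gamma>\<^bsup>1,1\<^esup> a \<cdot> \<gamma>\<^bsup>5,3\<^esup> yi))"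
    using rb_operator_shift[of _ 2 3] by (simp add: alpha_beta_pow_simps)
  moreover have "rb_operator (alpha (beta b)) = (\<Sum>(xj,yj)\<leftarrow>r. \<gamma>\<^bsup>4,5\<^esup> xj \<cdot> (\<gamma>\<^bsup>1,1\<^esup> b \<cdot> \<gamma>\<^bsup>6,2\<^esup> yj))"
    using rb_operator_shift[of _ 3 2] by (simp add: alpha_beta_pow_simps)
  ultimately show ?thesis
    by (simp only: mult_sum_list_left) (simp add: mult_sum_list_right rb_form_alpha_mult_beta)
qed

lemma rb_operator_left_expansion:
  "rb_operator (rb_operator a \<cdot> alpha (beta b))
    = (\<Sum>(xi,yi)\<leftarrow>r. \<Sum>(xj,yj)\<leftarrow>r. rb_form a b (xi \<cdot> xj) (beta yj) (beta yi))"
proof -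
  have "rb_operator (rb_operator a \<cdot> alpha (beta b))
      = (\<Sum>(xi,yi)\<leftarrow>r. \<gamma>\<^bsup>4,6\<^esup> xi \<cdot> ((rb_operator a \<cdot> \<gamma>\<^bsup>1,1\<^esup> b) \<cdot> \<gamma>\<^bsup>6,3\<^esup> yi))"
    using rb_operator_shift[of _ 3 3] by (simp add: alpha_beta_pow_simps)
  moreover have "rb_operator a = (\<Sum>(xj,yj)\<leftarrow>r. \<gamma>\<^bsup>1,6\<^esup> xj \<cdot> (a \<cdot> \<gamma>\<^bsup>3,3\<^esup> yj))"
    using rb_operator_shift[of _ 0 3] by (simp add: alpha_beta_pow_simps)
  ultimately show ?thesis
    by (simp add: mult_sum_list_left mult_sum_list_right rb_form_mult_beta_beta)
qed

lemma rb_operator_right_expansion: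
  "rb_operator (alpha (beta a) \<cdot> rb_operator b)
    = (\<Sum>(xi,yi)\<leftarrow>r. \<Sum>(xj,yj)\<leftarrow>r. rb_form a b (alpha xi) (alpha xj) (yj \<cdot> yi))"
proof -
  have "rb_operator (alpha (beta a) \<cdot> rb_operator b)
      = (\<Sum>(xi,yi)\<leftarrow>r. \<gamma>\<^bsup>4,6\<^esup> xi \<cdot> ((\<gamma>\<^bsup>1,1\<^esup> a \<cdot> rb_operator b) \<cdot> \<gamma>\<^bsup>6,3\<^esup> yi))"
    using rb_operator_shift[of _ 3 3] by (simp add: alpha_beta_pow_simps)
  moreover have "rb_operator b = (\<Sum>(xj,yj)\<leftarrow>r. \<gamma>\<^bsup>4,3\<^esup> xj \<cdot> (b \<cdot> \<gamma>\<^bsup>6,0\<^esup> yj))"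
    using rb_operator_shift[of _ 3 0] by (simp add: alpha_beta_pow_simps)
  ultimately show ?thesis
    by (simp add: mult_sum_list_left mult_sum_list_right rb_form_alpha_alpha_mult)
qed

end

locale bihom_aybe_solution = bihom_invariant_tensor +
  assumes aybe: "bihom_aybe s mu alpha beta r"
begin

lemma aybe_sum:
  assumes "trilinear_map s s F"
  shows "(\<Sum>(xi,yi)\<leftarrow>r. \<Sum>(xj,yj)\<leftarrow>r. F (alpha xi) (yi \<cdot> xj) (beta yj))
    = (\<Sum>(xi,yi)\<leftarrow>r. \<Sum>(xj,yj)\<leftarrow>r. F (xi \<cdot> xj) (beta yj) (beta yi))
      + (\<Sum>(xi,yi)\<leftarrow>r. \<Sum>(xj,yj)\<leftarrow>r. F (alpha xi) (alpha xj) (yj \<cdot> yi))"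
  using tensor3_eq_sum_eq[OF aybe[unfolded bihom_aybe_def] assms vector_space]
  by (simp add: sum_list_map_concat o_def split_def)

theorem rb_operator_rota_baxter:
  "rb_operator (alpha (beta a)) \<cdot> rb_operator (alpha (beta b))
    = rb_operator (alpha (beta a) \<cdot> rb_operator b + rb_operator a \<cdot> alpha (beta b))"
proof -
  have "rb_operator (alpha (beta a)) \<cdot> rb_operator (alpha (beta b))
      = (\<Sum>(xi,yi)\<leftarrow>r. \<Sum>(xj,yj)\<leftarrow>r. rb_form a b (xi \<cdot> xj) (beta yj) (beta yi))
        + (\<Sum>(xi,yi)\<leftarrow>r. \<Sum>(xj,yj)\<leftarrow>r. rb_form a b (alpha xi) (alpha xj) (yj \<cdot> yi))"
    unfolding rb_operator_product_expansion by (rule aybe_sum[OF trilinear_rb_form])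
  also have "\<dots> = rb_operator (rb_operator a \<cdot> alpha (beta b))
      + rb_operator (alpha (beta a) \<cdot> rb_operator b)"
    unfolding rb_operator_left_expansion rb_operator_right_expansion ..
  also have "\<dots> = rb_operator (alpha (beta a) \<cdot> rb_operator b + rb_operator a \<cdot> alpha (beta b))"
    using linear_rb_operator by (simp add: Vector_Spaces.linear_iff add.commute)
  finally show ?thesis .
qed

end

theorem mainTheorem9:
  fixes s :: "'k::field \<Rightarrow> 'a::ab_group_add \<Rightarrow> 'a"
    and mu :: "'a \<Rightarrow> 'a \<Rightarrow> 'a"
    and alpha beta :: "'a \<Rightarrow> 'a"
    and r :: "('a \<times> 'a) list"
    and R :: "'a \<Rightarrow> 'a"
  assumes alg: "bihom_assoc_alg s mu alpha beta"
    and r_alpha: "tensor2_eq s (tmap2 alpha r) r"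
    and r_beta: "tensor2_eq s (tmap2 beta r) r"
    and ybe: "bihom_aybe s mu alpha beta r"
    and R_def: "\<And>a. R a = (\<Sum>(x,y)\<leftarrow>r. mu (alpha ((beta ^^ 3) x)) (mu a ((alpha ^^ 3) y)))"
  shows "Vector_Spaces.linear s s R
    \<and> R \<circ> alpha = alpha \<circ> R \<and> R \<circ> beta = beta \<circ> R
    \<and> (\<forall>a b. mu (R (alpha (beta a))) (R (alpha (beta b)))
             = R (mu (alpha (beta a)) (R b) + mu (R a) (alpha (beta b))))"
proof -
  interpret bihom_aybe_solution s mu alpha beta r
    by unfold_locales (fact alg r_alpha r_beta ybe)+
  have R_eq: "R = rb_operator"
    by (simp add: fun_eq_iff R_def rb_operator_def alpha_beta_pow_simps)
  show ?thesis
    unfolding R_eq using linear_rb_operator rb_operator_rota_baxter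
    by (simp add: fun_eq_iff rb_operator_alpha_commute rb_operator_beta_commute)
qed

end
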